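(* Given the ability to perform incoherent unitaries, computational basis measurements and classical control (supplemented with an arbitrary ancillary state), it is impossible to implement $n$ Hadamards $H^{\otimes n}$ $\epsilon$-approximately with non-zero probability for $0\le \epsilon < 1-2^{-n}$. In particular, a single Hadamard cannot be implemented $\epsilon$-approximately with non-zero probability for $0\le\epsilon<\tfrac12$.
   Context: Fix the computational basis $\{|x\rangle\}$. A unitary is incoherent if it has the form $U=\sum_x e^{i\theta_x}|\pi(x)\rangle\langle x|$ for real $\theta_x$ and a permutation $\pi$. Such operations with an ancilla $\tau$ are modelled as channels $\rho\mapsto \mathrm{Tr}_2\big(U(\rho\otimes\tau)U^\dagger\big)$ with $U$ incoherent, or probabilistically as convex combinations of normalised subchannels $\rho\mapsto \alpha\,\mathrm{Tr}_X\big((I\otimes|x\rangle\langle x|)\,U(\rho\otimes\tau)U^\dagger\big)$ with $\alpha$ independent of $\rho$. A channel $\mathcal{E}$ $\epsilon$-approximates $\mathcal{V}$ if the induced trace distance $\max_\rho \tfrac12\|\mathcal{E}(\rho)-\mathcal{V}(\rho)\|_1\le\epsilon$. *)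

theory Defs
  imports "Jordan_Normal_Form.Jordan_Normal_Form"
begin

text \<open>Composite systems use the Kronecker ordering: basis index (i, a) of
  a d-dimensional system tensored with an m-dimensional one is i * m + a.\<close>

definition adj :: "complex mat \<Rightarrow> complex mat" where
  "adj A = mat (dim_col A) (dim_row A) (\<lambda>(i, j). cnj (A $$ (j, i)))"

definition kron :: "complex mat \<Rightarrow> complex mat \<Rightarrow> complex mat" where
  "kron A B = mat (dim_row A * dim_row B) (dim_col A * dim_col B)
     (\<lambda>(i, j). A $$ (i div dim_row B, j div dim_col B) * B $$ (i mod dim_row B, j mod dim_col B))"

definition ketbra :: "nat \<Rightarrow> nat \<Rightarrow> complex mat" where
  "ketbra k x = mat k k (\<lambda>(i, j). if i = x \<and> j = x then 1 else 0)"

definition ptrace2 :: "nat \<Rightarrow> nat \<Rightarrow> complex mat \<Rightarrow> complex mat" where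
  "ptrace2 d m M = mat d d (\<lambda>(y, y'). \<Sum>r<m. M $$ (y * m + r, y' * m + r))"

definition mtrace :: "complex mat \<Rightarrow> complex" where
  "mtrace A = (\<Sum>i<dim_row A. A $$ (i, i))"

definition density :: "nat \<Rightarrow> complex mat \<Rightarrow> bool" where
  "density D \<rho> \<longleftrightarrow> \<rho> \<in> carrier_mat D D \<and> adj \<rho> = \<rho> \<and>
     (\<forall>v :: nat \<Rightarrow> complex. 0 \<le> Re (\<Sum>i<D. \<Sum>j<D. cnj (v i) * \<rho> $$ (i, j) * v j)) \<and>
     mtrace \<rho> = 1"

definition incoherent_unitary :: "nat \<Rightarrow> complex mat \<Rightarrow> bool" where
  "incoherent_unitary D U \<longleftrightarrow>
     (\<exists>\<pi> (\<theta> :: nat \<Rightarrow> real). bij_betw \<pi> {..<D} {..<D} \<and>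
        U = mat D D (\<lambda>(i, j). if i = \<pi> j then exp (\<i> * complex_of_real (\<theta> j)) else 0))"

text \<open>Trace norm = sum of the singular values (counted with multiplicity), i.e. of the
  square roots of the eigenvalues of A^dagger A (roots of its characteristic polynomial).\<close>
definition trace_norm :: "complex mat \<Rightarrow> real" where
  "trace_norm A = (let p = char_poly (adj A * A) in
     \<Sum>e\<in>{e. poly p e = 0}. real (order e p) * sqrt (cmod e))"

text \<open>Normalised subchannel on n qubits: ancilla tau on G (x) X (dimensions g, k), incoherent
  unitary U on system (x) G (x) X, project X onto outcome |x>, trace out G and X, and rescale by a
  constant alpha (independent of rho) so that the map is trace preserving.  For g = 1 this is
  exactly alpha Tr_X((I (x) |x><x|) U (rho (x) tau) U^dagger); for k = 1 it is the deterministic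
  channel Tr_2(U (rho (x) tau) U^dagger).\<close>
definition normalised_subchannel :: "nat \<Rightarrow> (complex mat \<Rightarrow> complex mat) \<Rightarrow> bool" where
  "normalised_subchannel n E \<longleftrightarrow>
     (\<exists>g k \<tau> U x (\<alpha> :: real).
        density (g * k) \<tau> \<and> x < k \<and> incoherent_unitary (2 ^ n * (g * k)) U \<and>
        (\<forall>\<rho> \<in> carrier_mat (2 ^ n) (2 ^ n).
           E \<rho> = complex_of_real \<alpha> \<cdot>\<^sub>m ptrace2 (2 ^ n) (g * k)
                   (kron (1\<^sub>m (2 ^ n)) (kron (1\<^sub>m g) (ketbra k x)) * (U * kron \<rho> \<tau> * adj U))) \<and>
        (\<forall>\<rho>. density (2 ^ n) \<rho> \<longrightarrow> mtrace (E \<rho>) = 1))"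

text \<open>Operations implementable with non-zero probability: finite convex combinations of
  normalised subchannels.\<close>
definition implementable :: "nat \<Rightarrow> (complex mat \<Rightarrow> complex mat) \<Rightarrow> bool" where
  "implementable n E \<longleftrightarrow>
     (\<exists>(N :: nat) (p :: nat \<Rightarrow> real) (F :: nat \<Rightarrow> complex mat \<Rightarrow> complex mat).
        (\<forall>i<N. 0 \<le> p i \<and> normalised_subchannel n (F i)) \<and> (\<Sum>i<N. p i) = 1 \<and>
        (\<forall>\<rho> \<in> carrier_mat (2 ^ n) (2 ^ n).
           E \<rho> = mat (2 ^ n) (2 ^ n) (\<lambda>(a, b). \<Sum>i<N. complex_of_real (p i) * F i \<rho> $$ (a, b))))"

definition hadamard1 :: "complex mat" where
  "hadamard1 = mat 2 2 (\<lambda>(i, j). if i = 1 \<and> j = 1 then - 1 / complex_of_real (sqrt 2)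
                                    else 1 / complex_of_real (sqrt 2))"

fun hadamard_n :: "nat \<Rightarrow> complex mat" where
  "hadamard_n 0 = 1\<^sub>m 1"
| "hadamard_n (Suc n) = kron hadamard1 (hadamard_n n)"

definition approximates :: "nat \<Rightarrow> real \<Rightarrow> (complex mat \<Rightarrow> complex mat) \<Rightarrow> (complex mat \<Rightarrow> complex mat) \<Rightarrow> bool" where
  "approximates n \<epsilon> E V \<longleftrightarrow>
     (\<forall>\<rho>. density (2 ^ n) \<rho> \<longrightarrow> trace_norm (E \<rho> - V \<rho>) / 2 \<le> \<epsilon>)"

end

theory Submission
  imports Defs "Jordan_Normal_Form.Schur_Decomposition"
begin

text \<open>
  An incoherent unitary sends each basis vector to a phase times another basis vector, so
  conjugating by it only permutes the diagonal.  Tensoring with an ancilla, projecting the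
  ancilla onto a basis state and tracing it out only combine diagonal entries as well.  Hence the
  diagonal of \<open>E \<rho>\<close> depends only on the diagonal of \<open>\<rho>\<close>.  The \<open>2^n\<close> states
  \<open>\<psi>\<^sub>x = H |x><x| H\<close> all have diagonal \<open>2^-n\<close>, so their images share one diagonal \<open>d\<close>;
  as \<open>d\<close> sums to 1, some \<open>d\<^sub>x \<le> 2^-n\<close>.  The target \<open>H \<psi>\<^sub>x H = |x><x|\<close> differs from
  \<open>E \<psi>\<^sub>x\<close> on the diagonal by at least \<open>2 (1 - d\<^sub>x)\<close> in \<open>l\<^sub>1\<close>-norm, and by the spectral
  theorem the \<open>l\<^sub>1\<close>-norm of the diagonal of a Hermitian matrix is at most its trace norm.
\<close>

lemma sum_lessThan_mult:
  fixes f :: "nat \<Rightarrow> 'a :: comm_monoid_add"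
  shows "(\<Sum>t<b * d. f t) = (\<Sum>s<b. \<Sum>u<d. f (s * d + u))"
proof -
  have "(\<Sum>u<d. f (s * d + u)) = sum f {s * d..<s * d + d}" for s
    using sum.shift_bounds_nat_ivl[of f 0 "s * d" d] by (simp add: atLeast0LessThan add.commute)
  then show ?thesis by (simp add: sum.nat_group)
qed

lemma mult_add_less_mult:
  assumes "(y :: nat) < N" "r < D"
  shows "y * D + r < N * D"
proof -
  have "y * D + r < Suc y * D" using assms(2) by simp
  also have "\<dots> \<le> N * D" using assms(1) by (intro mult_le_mono1) simp
  finally show ?thesis .
qed

lemma mod_less_of_less_mult: "(i :: nat) < a * b \<Longrightarrow> i mod b < b"
  by (metis mod_less_divisor mult_0_right not_less_zero gr0I)

lemma mult_mat_index_sum: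
  "A \<in> carrier_mat n m \<Longrightarrow> B \<in> carrier_mat m p \<Longrightarrow> i < n \<Longrightarrow> j < p \<Longrightarrow>
   (A * B) $$ (i, j) = (\<Sum>k<m. A $$ (i, k) * B $$ (k, j))"
  by (simp add: index_mult_mat scalar_prod_def row_def col_def atLeast0LessThan)

lemma diagonal_mat_mult_index:
  assumes "P \<in> carrier_mat m m" "diagonal_mat P" "X \<in> carrier_mat m p" "a < m" "b < p"
  shows "(P * X) $$ (a, b) = P $$ (a, a) * X $$ (a, b)"
proof -
  have "(P * X) $$ (a, b) = (\<Sum>t<m. P $$ (a, t) * X $$ (t, b))"
    using assms by (intro mult_mat_index_sum)
  also have "\<dots> = (\<Sum>t<m. if t = a then P $$ (a, a) * X $$ (a, b) else 0)"
    using assms by (intro sum.cong refl) (auto simp: diagonal_mat_def)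
  finally show ?thesis using assms by simp
qed

lemma exists_le_average:
  fixes f :: "nat \<Rightarrow> real"
  assumes "0 < N"
  shows "\<exists>x<N. f x \<le> (\<Sum>j<N. f j) / N"
proof (rule ccontr)
  assume "\<not> ?thesis"
  then have "(\<Sum>j<N. (\<Sum>j<N. f j) / N) < (\<Sum>j<N. f j)"
    using assms by (intro sum_strict_mono) auto
  then show False using assms by simp
qed

lemma adj_dim [simp]: "dim_row (adj A) = dim_col A" "dim_col (adj A) = dim_row A"
  by (auto simp: adj_def)

lemma adj_index [simp]: "i < dim_col A \<Longrightarrow> j < dim_row A \<Longrightarrow> adj A $$ (i, j) = cnj (A $$ (j, i))"
  by (auto simp: adj_def)

lemma adj_carrier [simp]: "A \<in> carrier_mat n m \<Longrightarrow> adj A \<in> carrier_mat m n"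
  by (metis adj_dim carrier_matD carrier_matI)

lemma adj_adj [simp]: "adj (adj A) = A"
  by (rule eq_matI) auto

lemma adj_one_mat [simp]: "adj (1\<^sub>m n) = 1\<^sub>m n"
  by (rule eq_matI) auto

lemma adj_mult:
  assumes "A \<in> carrier_mat n m" "B \<in> carrier_mat m p"
  shows "adj (A * B) = adj B * adj A"
  by (rule eq_matI) (use assms in \<open>auto simp: index_mult_mat scalar_prod_def row_def col_def mult.commute\<close>)

lemma adj_minus:
  assumes "A \<in> carrier_mat n m" "B \<in> carrier_mat n m"
  shows "adj (A - B) = adj A - adj B"
  by (rule eq_matI) (use assms in auto)

lemma adj_smult_real: "adj (complex_of_real a \<cdot>\<^sub>m A) = complex_of_real a \<cdot>\<^sub>m adj A"
  by (rule eq_matI) auto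

lemma adj_sandwich:
  assumes "U \<in> carrier_mat n m" "M \<in> carrier_mat m m"
  shows "adj (U * M * adj U) = U * adj M * adj U"
proof -
  have "adj (U * M * adj U) = U * adj (U * M)"
    using assms adj_mult[of "U * M" n m "adj U" n] by simp
  also have "\<dots> = U * adj M * adj U"
    using assms adj_mult[of U n m M m] assoc_mult_mat[of U n m "adj M" m "adj U" n] by simp
  finally show ?thesis .
qed

lemma ketbra_carrier [simp]: "ketbra k x \<in> carrier_mat k k"
  by (simp add: ketbra_def)

lemma ketbra_dim [simp]: "dim_row (ketbra k x) = k" "dim_col (ketbra k x) = k"
  by (simp_all add: ketbra_def)

lemma adj_ketbra [simp]: "adj (ketbra k x) = ketbra k x"
  by (rule eq_matI) (auto simp: ketbra_def)

lemma diagonal_mat_ketbra: "diagonal_mat (ketbra k x)"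
  by (simp add: diagonal_mat_def ketbra_def)

lemma diagonal_mat_one_mat: "diagonal_mat (1\<^sub>m n)"
  by (simp add: diagonal_mat_def)

lemma kron_dim [simp]:
  "dim_row (kron A B) = dim_row A * dim_row B" "dim_col (kron A B) = dim_col A * dim_col B"
  by (auto simp: kron_def)

lemma kron_carrier [simp]:
  "A \<in> carrier_mat a b \<Longrightarrow> B \<in> carrier_mat c d \<Longrightarrow> kron A B \<in> carrier_mat (a * c) (b * d)"
  by (metis kron_dim carrier_matD carrier_matI)

lemma kron_index:
  "i < dim_row A * dim_row B \<Longrightarrow> j < dim_col A * dim_col B \<Longrightarrow>
   kron A B $$ (i, j) = A $$ (i div dim_row B, j div dim_col B) * B $$ (i mod dim_row B, j mod dim_col B)"
  by (simp add: kron_def)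

lemma kron_index_mult_add:
  assumes "A \<in> carrier_mat a b" "B \<in> carrier_mat c d" "i < a" "r < c" "j < b" "s < d"
  shows "kron A B $$ (i * c + r, j * d + s) = A $$ (i, j) * B $$ (r, s)"
  using assms by (simp add: kron_index mult_add_less_mult)

lemma adj_kron: "adj (kron A B) = kron (adj A) (adj B)"
  by (rule eq_matI)
    (auto simp: kron_index less_mult_imp_div_less mod_less_of_less_mult)

lemma diagonal_mat_kron:
  assumes "diagonal_mat A" "diagonal_mat B" "dim_row B = dim_col B"
  shows "diagonal_mat (kron A B)"
  unfolding diagonal_mat_def
proof (intro allI impI)
  fix i j assume i: "i < dim_row (kron A B)" and j: "j < dim_col (kron A B)" and "i \<noteq> j"
  then have "i div dim_row B \<noteq> j div dim_row B \<or> i mod dim_row B \<noteq> j mod dim_row B"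
    by (metis div_mult_mod_eq)
  then show "kron A B $$ (i, j) = 0"
    using assms i j less_mult_imp_div_less[of i] less_mult_imp_div_less[of j]
      mod_less_of_less_mult[of i] mod_less_of_less_mult[of j]
    by (auto simp: kron_index diagonal_mat_def)
qed

lemma kron_mult:
  assumes A: "A \<in> carrier_mat a b" and B: "B \<in> carrier_mat c d"
    and C: "C \<in> carrier_mat b e" and D: "D \<in> carrier_mat d f"
  shows "kron A B * kron C D = kron (A * C) (B * D)"
proof (rule eq_matI)
  fix i j assume "i < dim_row (kron (A * C) (B * D))" "j < dim_col (kron (A * C) (B * D))"
  then have i: "i < a * c" and j: "j < e * f" using A B C D by auto
  let ?i1 = "i div c" and ?i2 = "i mod c" and ?j1 = "j div f" and ?j2 = "j mod f"
  have bounds: "?i1 < a" "?i2 < c" "?j1 < e" "?j2 < f"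
    using i j by (simp_all add: less_mult_imp_div_less mod_less_of_less_mult)
  have "(kron A B * kron C D) $$ (i, j) = (\<Sum>s<b. \<Sum>u<d. kron A B $$ (i, s * d + u) * kron C D $$ (s * d + u, j))"
    using A B C D i j by (simp add: mult_mat_index_sum[of _ "a * c" "b * d" _ "e * f"] sum_lessThan_mult
        del: index_mult_mat)
  also have "\<dots> = (\<Sum>s<b. \<Sum>u<d. (A $$ (?i1, s) * C $$ (s, ?j1)) * (B $$ (?i2, u) * D $$ (u, ?j2)))"
    using A B C D i j by (intro sum.cong refl) (simp add: kron_index mult_add_less_mult)
  also have "\<dots> = (A * C) $$ (?i1, ?j1) * (B * D) $$ (?i2, ?j2)"
    using A B C D bounds
    by (simp add: mult_mat_index_sum[of A a b C e] mult_mat_index_sum[of B c d D f] sum_product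
        del: index_mult_mat)
  also have "\<dots> = kron (A * C) (B * D) $$ (i, j)"
    using A B C D i j by (simp add: kron_index)
  finally show "(kron A B * kron C D) $$ (i, j) = kron (A * C) (B * D) $$ (i, j)" .
qed (use assms in auto)

lemma kron_one_mat: "kron (1\<^sub>m a) (1\<^sub>m b) = 1\<^sub>m (a * b)"
proof (rule eq_matI)
  fix i j assume "i < dim_row (1\<^sub>m (a * b))" "j < dim_col (1\<^sub>m (a * b))"
  then have "i < a * b" "j < a * b" by auto
  then show "kron (1\<^sub>m a) (1\<^sub>m b) $$ (i, j) = 1\<^sub>m (a * b) $$ (i, j)"
    by (auto simp: kron_index less_mult_imp_div_less mod_less_of_less_mult) (metis div_mult_mod_eq)
qed auto

section \<open>Spectral theorem for Hermitian matrices\<close>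

definition unitary_mat :: "nat \<Rightarrow> complex mat \<Rightarrow> bool" where
  "unitary_mat n U \<longleftrightarrow> U \<in> carrier_mat n n \<and> adj U * U = 1\<^sub>m n"

lemma unitary_mat_mult_adj: "unitary_mat n U \<Longrightarrow> U * adj U = 1\<^sub>m n"
  using mat_mult_left_right_inverse[of "adj U" n U] by (simp add: unitary_mat_def)

lemma unitary_mat_cancel:
  assumes "unitary_mat n U" "X \<in> carrier_mat n p"
  shows "adj U * (U * X) = X" "U * (adj U * X) = X"
proof -
  have U: "U \<in> carrier_mat n n" "adj U \<in> carrier_mat n n" using assms(1) by (auto simp: unitary_mat_def)
  show "adj U * (U * X) = X"
    using assoc_mult_mat[OF U(2) U(1) assms(2)] assms by (simp add: unitary_mat_def)
  show "U * (adj U * X) = X"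
    using assoc_mult_mat[OF U(1) U(2) assms(2)] assms unitary_mat_mult_adj by simp
qed

lemma unitary_mat_sandwich_cancel:
  assumes U: "unitary_mat n U" and A: "A \<in> carrier_mat n n"
  shows "U * (adj U * A * U) * adj U = A"
proof -
  have Uc: "U \<in> carrier_mat n n" "adj U \<in> carrier_mat n n" using U by (auto simp: unitary_mat_def)
  have B: "adj U * A \<in> carrier_mat n n" using mult_carrier_mat[OF Uc(2) A] .
  have "U * (adj U * A * U) * adj U = U * (adj U * A * U * adj U)"
    using assoc_mult_mat[OF Uc(1) mult_carrier_mat[OF B Uc(1)] Uc(2)] .
  also have "adj U * A * U * adj U = adj U * A"
    using assoc_mult_mat[OF B Uc(1) Uc(2)] unitary_mat_mult_adj[OF U] right_mult_one_mat[OF B] by simp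
  also have "U * (adj U * A) = A" by (rule unitary_mat_cancel(2)[OF U A])
  finally show ?thesis .
qed

lemma nested_sandwich:
  assumes U: "U \<in> carrier_mat n n" and V: "V \<in> carrier_mat n n" and M: "M \<in> carrier_mat n n"
  shows "U * (V * M * adj V) * adj U = U * V * M * adj (U * V)"
proof -
  have VM: "V * M \<in> carrier_mat n n" using mult_carrier_mat[OF V M] .
  have "U * (V * M * adj V) = U * V * M * adj V"
    using assoc_mult_mat[OF U VM adj_carrier[OF V]] assoc_mult_mat[OF U V M] by simp
  then have "U * (V * M * adj V) * adj U = U * V * M * (adj V * adj U)"
    using assoc_mult_mat[OF mult_carrier_mat[OF mult_carrier_mat[OF U V] M] adj_carrier[OF V] adj_carrier[OF U]]
    by simp
  then show ?thesis using adj_mult[OF U V] by simp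
qed

lemma unitary_sandwich_mult:
  assumes U: "unitary_mat n U" and M: "M \<in> carrier_mat n n" and N: "N \<in> carrier_mat n n"
  shows "U * M * adj U * (U * N * adj U) = U * (M * N) * adj U"
proof -
  have Uc: "U \<in> carrier_mat n n" "adj U \<in> carrier_mat n n" using U by (auto simp: unitary_mat_def)
  have UM: "U * M \<in> carrier_mat n n" using mult_carrier_mat[OF Uc(1) M] .
  have NU: "N * adj U \<in> carrier_mat n n" using mult_carrier_mat[OF N Uc(2)] .
  have "U * N * adj U = U * (N * adj U)" using assoc_mult_mat[OF Uc(1) N Uc(2)] .
  then have "adj U * (U * N * adj U) = N * adj U" using unitary_mat_cancel(1)[OF U NU] by simp
  moreover have "U * M * adj U * (U * N * adj U) = U * M * (adj U * (U * N * adj U))"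
    using assoc_mult_mat[OF UM Uc(2) mult_carrier_mat[OF mult_carrier_mat[OF Uc(1) N] Uc(2)]] .
  moreover have "U * M * (N * adj U) = U * (M * N) * adj U"
    using assoc_mult_mat[OF UM N Uc(2)] assoc_mult_mat[OF Uc(1) M N] by simp
  ultimately show ?thesis by simp
qed

lemma unitary_mat_mult:
  assumes U: "unitary_mat n U" and V: "unitary_mat n V"
  shows "unitary_mat n (U * V)"
proof -
  have UV: "U \<in> carrier_mat n n" "V \<in> carrier_mat n n" using U V by (auto simp: unitary_mat_def)
  have "adj (U * V) * (U * V) = adj V * (adj U * (U * V))"
    using UV by (simp add: adj_mult[of U n n V n] assoc_mult_mat[of "adj V" n n "adj U" n "U * V" n])
  also have "\<dots> = 1\<^sub>m n" using UV U V by (simp add: unitary_mat_cancel unitary_mat_def)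
  finally show ?thesis using UV by (simp add: unitary_mat_def)
qed

lemma unitary_mat_column_norm:
  assumes U: "unitary_mat n U" and k: "k < n"
  shows "(\<Sum>j<n. (cmod (U $$ (j, k)))\<^sup>2) = 1"
proof -
  have Uc: "U \<in> carrier_mat n n" using U by (simp add: unitary_mat_def)
  have "complex_of_real (\<Sum>j<n. (cmod (U $$ (j, k)))\<^sup>2) = (\<Sum>j<n. cnj (U $$ (j, k)) * U $$ (j, k))"
    by (simp only: of_real_sum complex_norm_square) (simp add: mult.commute)
  also have "\<dots> = (adj U * U) $$ (k, k)"
    using Uc k by (simp add: mult_mat_index_sum[of _ n n _ n] del: index_mult_mat)
  also have "\<dots> = 1" using U k by (simp add: unitary_mat_def)
  finally show ?thesis by (metis of_real_eq_1_iff)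
qed

definition real_diag_mat :: "nat \<Rightarrow> (nat \<Rightarrow> real) \<Rightarrow> complex mat" where
  "real_diag_mat n l = mat n n (\<lambda>(i, j). if i = j then complex_of_real (l i) else 0)"

lemma real_diag_mat_carrier [simp]: "real_diag_mat n l \<in> carrier_mat n n"
  by (simp add: real_diag_mat_def)

lemma adj_real_diag_mat [simp]: "adj (real_diag_mat n l) = real_diag_mat n l"
  by (rule eq_matI) (auto simp: real_diag_mat_def)

lemma mult_real_diag_mat_index:
  assumes "U \<in> carrier_mat m n" "i < m" "k < n"
  shows "(U * real_diag_mat n l) $$ (i, k) = U $$ (i, k) * complex_of_real (l k)"
proof -
  have "(U * real_diag_mat n l) $$ (i, k) = (\<Sum>t<n. U $$ (i, t) * real_diag_mat n l $$ (t, k))"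
    using assms by (intro mult_mat_index_sum[of _ m n _ n]) auto
  also have "\<dots> = (\<Sum>t<n. if t = k then U $$ (i, k) * complex_of_real (l k) else 0)"
    using assms by (intro sum.cong refl) (auto simp: real_diag_mat_def)
  finally show ?thesis using assms by simp
qed

lemma real_diag_mat_mult: "real_diag_mat n l * real_diag_mat n l' = real_diag_mat n (\<lambda>k. l k * l' k)"
proof (rule eq_matI)
  fix i j assume "i < dim_row (real_diag_mat n (\<lambda>k. l k * l' k))" "j < dim_col (real_diag_mat n (\<lambda>k. l k * l' k))"
  then have "i < n" "j < n" by (simp_all add: real_diag_mat_def)
  then show "(real_diag_mat n l * real_diag_mat n l') $$ (i, j) = real_diag_mat n (\<lambda>k. l k * l' k) $$ (i, j)"
    using mult_real_diag_mat_index[of "real_diag_mat n l" n n i j l']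
    by (simp add: real_diag_mat_def del: index_mult_mat)
qed (simp_all add: real_diag_mat_def)

lemma real_diag_sandwich_index:
  assumes "U \<in> carrier_mat n n" "i < n" "j < n"
  shows "(U * real_diag_mat n l * adj U) $$ (i, j) = (\<Sum>k<n. U $$ (i, k) * complex_of_real (l k) * cnj (U $$ (j, k)))"
  using assms
  by (simp add: mult_mat_index_sum[of "U * real_diag_mat n l" n n "adj U" n] mult_real_diag_mat_index
      del: index_mult_mat)

definition block_diag :: "complex \<Rightarrow> complex mat \<Rightarrow> complex mat" where
  "block_diag e C = mat (Suc (dim_row C)) (Suc (dim_col C))
     (\<lambda>(i, j). if i = 0 \<and> j = 0 then e else if i = 0 \<or> j = 0 then 0 else C $$ (i - 1, j - 1))"

lemma block_diag_dim [simp]: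
  "dim_row (block_diag e C) = Suc (dim_row C)" "dim_col (block_diag e C) = Suc (dim_col C)"
  by (simp_all add: block_diag_def)

lemma block_diag_carrier [simp]: "C \<in> carrier_mat m n \<Longrightarrow> block_diag e C \<in> carrier_mat (Suc m) (Suc n)"
  by (metis block_diag_dim carrier_matD carrier_matI)

lemma block_diag_index [simp]:
  "block_diag e C $$ (0, 0) = e"
  "j < dim_col C \<Longrightarrow> block_diag e C $$ (0, Suc j) = 0"
  "i < dim_row C \<Longrightarrow> block_diag e C $$ (Suc i, 0) = 0"
  "i < dim_row C \<Longrightarrow> j < dim_col C \<Longrightarrow> block_diag e C $$ (Suc i, Suc j) = C $$ (i, j)"
  by (simp_all add: block_diag_def)

lemma adj_block_diag: "adj (block_diag e C) = block_diag (cnj e) (adj C)"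
proof (rule eq_matI)
  fix i j assume "i < dim_row (block_diag (cnj e) (adj C))" "j < dim_col (block_diag (cnj e) (adj C))"
  then show "adj (block_diag e C) $$ (i, j) = block_diag (cnj e) (adj C) $$ (i, j)"
    by (cases i; cases j) simp_all
qed simp_all

lemma block_diag_one_mat: "block_diag 1 (1\<^sub>m m) = 1\<^sub>m (Suc m)"
proof (rule eq_matI)
  fix i j assume "i < dim_row (1\<^sub>m (Suc m))" "j < dim_col (1\<^sub>m (Suc m))"
  then show "block_diag 1 (1\<^sub>m m) $$ (i, j) = 1\<^sub>m (Suc m) $$ (i, j)"
    by (cases i; cases j) simp_all
qed simp_all

lemma real_diag_mat_Suc:
  "real_diag_mat (Suc m) l = block_diag (complex_of_real (l 0)) (real_diag_mat m (\<lambda>k. l (Suc k)))"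
proof (rule eq_matI)
  fix i j assume "i < dim_row (block_diag (complex_of_real (l 0)) (real_diag_mat m (\<lambda>k. l (Suc k))))"
    "j < dim_col (block_diag (complex_of_real (l 0)) (real_diag_mat m (\<lambda>k. l (Suc k))))"
  then show "real_diag_mat (Suc m) l $$ (i, j)
      = block_diag (complex_of_real (l 0)) (real_diag_mat m (\<lambda>k. l (Suc k))) $$ (i, j)"
    by (cases i; cases j) (simp_all add: real_diag_mat_def)
qed (simp_all add: real_diag_mat_def)

lemma block_diag_mult:
  assumes A: "A \<in> carrier_mat m m" and B: "B \<in> carrier_mat m m"
  shows "block_diag a A * block_diag b B = block_diag (a * b) (A * B)"
proof (rule eq_matI)
  fix i j assume "i < dim_row (block_diag (a * b) (A * B))" "j < dim_col (block_diag (a * b) (A * B))"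
  then have i: "i < Suc m" and j: "j < Suc m" using A B by auto
  have dims: "dim_row (A * B) = m" "dim_col (A * B) = m" using A B by auto
  have "(block_diag a A * block_diag b B) $$ (i, j)
      = (\<Sum>k<Suc m. block_diag a A $$ (i, k) * block_diag b B $$ (k, j))"
    using A B i j by (intro mult_mat_index_sum[of _ "Suc m" "Suc m" _ "Suc m"]) auto
  also have "\<dots> = block_diag a A $$ (i, 0) * block_diag b B $$ (0, j)
        + (\<Sum>k<m. block_diag a A $$ (i, Suc k) * block_diag b B $$ (Suc k, j))"
    by (rule sum.lessThan_Suc_shift)
  also have "\<dots> = block_diag (a * b) (A * B) $$ (i, j)"
    using A B i j dims
    by (cases i; cases j) (simp_all add: mult_mat_index_sum[of _ m m _ m] del: index_mult_mat)
  finally show "(block_diag a A * block_diag b B) $$ (i, j) = block_diag (a * b) (A * B) $$ (i, j)" .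
qed (use A B in auto)

lemma block_diag_of_first_row_column:
  assumes B: "B \<in> carrier_mat (Suc m) (Suc m)"
    and col: "\<And>i. i < Suc m \<Longrightarrow> B $$ (i, 0) = (if i = 0 then e else 0)"
    and row: "\<And>j. j < Suc m \<Longrightarrow> B $$ (0, j) = (if j = 0 then e else 0)"
  shows "B = block_diag e (mat m m (\<lambda>(i, j). B $$ (Suc i, Suc j)))"
proof (rule eq_matI)
  fix i j assume "i < dim_row (block_diag e (mat m m (\<lambda>(i, j). B $$ (Suc i, Suc j))))"
    "j < dim_col (block_diag e (mat m m (\<lambda>(i, j). B $$ (Suc i, Suc j))))"
  then have "i < Suc m" "j < Suc m" by simp_all
  then show "B $$ (i, j) = block_diag e (mat m m (\<lambda>(i, j). B $$ (Suc i, Suc j))) $$ (i, j)"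
    using col row by (cases i; cases j) simp_all
qed (use B in auto)

lemma unitary_mat_block_diag_one:
  assumes "unitary_mat m U"
  shows "unitary_mat (Suc m) (block_diag 1 U)"
  using assms block_diag_mult[of "adj U" m U]
  by (simp add: unitary_mat_def adj_block_diag block_diag_one_mat)

lemma hermitian_block_diag_of_first_column:
  assumes B: "B \<in> carrier_mat (Suc m) (Suc m)" and hB: "adj B = B"
    and col: "\<And>i. i < Suc m \<Longrightarrow> B $$ (i, 0) = (if i = 0 then complex_of_real r else 0)"
  obtains C where "C \<in> carrier_mat m m" "adj C = C" "B = block_diag (complex_of_real r) C"
proof -
  define C where "C = mat m m (\<lambda>(i, j). B $$ (Suc i, Suc j))"
  have row: "B $$ (0, j) = (if j = 0 then complex_of_real r else 0)" if "j < Suc m" for j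
    using col[OF that] hB B that
    by (metis adj_index carrier_matD complex_cnj_zero complex_cnj_complex_of_real zero_less_Suc)
  have "B = block_diag (complex_of_real r) C"
    unfolding C_def using B col row by (rule block_diag_of_first_row_column)
  moreover have "adj C = C"
  proof (rule eq_matI)
    fix i j assume "i < dim_row C" "j < dim_col C"
    then have "i < m" "j < m" by (simp_all add: C_def)
    then show "adj C $$ (i, j) = C $$ (i, j)"
      using adj_index[of "Suc i" B "Suc j"] carrier_matD[OF B] by (simp add: C_def hB)
  qed (simp_all add: C_def)
  moreover have "C \<in> carrier_mat m m" by (simp add: C_def)
  ultimately show ?thesis using that by blast
qed

lemma cscalar_prod_self:
  "v \<in> carrier_vec n \<Longrightarrow> v \<bullet>c v = complex_of_real (\<Sum>k<n. (cmod (v $ k))\<^sup>2)"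
  by (simp add: scalar_prod_def atLeast0LessThan of_real_sum complex_norm_square del: of_real_power)

lemma unitary_mat_of_corthogonal:
  assumes ws: "set ws \<subseteq> carrier_vec n" "corthogonal ws" "length ws = n"
  obtains W c where "unitary_mat n W" "\<And>j. j < n \<Longrightarrow> c j \<noteq> 0" "\<And>j. j < n \<Longrightarrow> col W j = c j \<cdot>\<^sub>v ws ! j"
proof -
  have ws_carrier: "ws ! j \<in> carrier_vec n" if "j < n" for j using ws that by auto
  define c where "c j = sqrt (\<Sum>k<n. (cmod (ws ! j $ k))\<^sup>2)" for j
  have c: "ws ! j \<bullet>c ws ! j = complex_of_real (c j) * complex_of_real (c j)" "c j > 0" if j: "j < n" for j
  proof -
    define s where "s = (\<Sum>k<n. (cmod (ws ! j $ k))\<^sup>2)"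
    have s: "ws ! j \<bullet>c ws ! j = complex_of_real s"
      unfolding s_def by (rule cscalar_prod_self[OF ws_carrier[OF j]])
    moreover have "ws ! j \<bullet>c ws ! j \<noteq> 0" using ws(2,3) j by (auto simp: corthogonal_def)
    moreover have "s \<ge> 0" by (simp add: s_def sum_nonneg)
    ultimately have "s > 0" by auto
    moreover have "c j = sqrt s" by (simp add: c_def s_def)
    ultimately show "ws ! j \<bullet>c ws ! j = complex_of_real (c j) * complex_of_real (c j)" "c j > 0"
      using s by (simp_all flip: of_real_mult)
  qed
  define W where "W = mat n n (\<lambda>(i, j). ws ! j $ i / complex_of_real (c j))"
  have W: "W \<in> carrier_mat n n" by (simp add: W_def)
  have "adj W * W = 1\<^sub>m n"
  proof (rule eq_matI)
    fix i j assume "i < dim_row (1\<^sub>m n)" "j < dim_col (1\<^sub>m n)"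
    then have i: "i < n" and j: "j < n" by auto
    have "(adj W * W) $$ (i, j)
        = (\<Sum>k<n. ws ! j $ k * cnj (ws ! i $ k)) / (complex_of_real (c i) * complex_of_real (c j))"
      using W i j by (simp add: mult_mat_index_sum[of _ n n _ n] W_def sum_divide_distrib field_simps
          del: index_mult_mat)
    also have "(\<Sum>k<n. ws ! j $ k * cnj (ws ! i $ k)) = ws ! j \<bullet>c ws ! i"
      using ws_carrier[OF i] ws_carrier[OF j] by (simp add: scalar_prod_def atLeast0LessThan)
    also have "\<dots> / (complex_of_real (c i) * complex_of_real (c j)) = 1\<^sub>m n $$ (i, j)"
      using c[OF i] ws(2,3) i j by (cases "i = j") (auto simp: corthogonal_def)
    finally show "(adj W * W) $$ (i, j) = 1\<^sub>m n $$ (i, j)" .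
  qed (use W in auto)
  moreover have "col W j = (1 / complex_of_real (c j)) \<cdot>\<^sub>v ws ! j" if "j < n" for j
    using that ws_carrier[OF that] by (intro eq_vecI) (auto simp: W_def)
  moreover have "1 / complex_of_real (c j) \<noteq> 0" if "j < n" for j using c(2)[OF that] by simp
  ultimately show ?thesis
    using W by (intro that[of W "\<lambda>j. 1 / complex_of_real (c j)"]) (auto simp: unitary_mat_def)
qed

lemma unitary_mat_first_column:
  assumes v: "v \<in> carrier_vec n" and v0: "v \<noteq> 0\<^sub>v n"
  obtains W c where "unitary_mat n W" "c \<noteq> 0" "col W 0 = c \<cdot>\<^sub>v v"
proof -
  interpret cof_vec_space n "TYPE(complex)" .
  define b where "b = basis_completion v"
  from basis_completion[OF v v0, folded b_def]
  have dist_b: "distinct b" and indep: "\<not> lin_dep (set b)" and b: "set b \<subseteq> carrier_vec n"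
    and hd_b: "hd b = v" and len_b: "length b = n" by auto
  have n: "0 < n" using v v0 by (auto intro!: eq_vecI)
  with hd_b len_b obtain vs where bv: "b = v # vs" by (cases b) auto
  define ws where "ws = gram_schmidt n b"
  from gram_schmidt_result[OF b dist_b indep refl, folded ws_def]
  have ws: "set ws \<subseteq> carrier_vec n" "corthogonal ws" "length ws = n" by (auto simp: len_b)
  have "ws ! 0 = v"
    using gram_schmidt_hd[OF v, of vs] ws(3) n unfolding ws_def bv by (cases "gram_schmidt n (v # vs)") auto
  with unitary_mat_of_corthogonal[OF ws] n show ?thesis using that by metis
qed

lemma hermitian_deflation:
  assumes A: "A \<in> carrier_mat (Suc m) (Suc m)" and hA: "adj A = A"
  obtains W r where "unitary_mat (Suc m) W"
    and "\<And>i. i < Suc m \<Longrightarrow> (adj W * A * W) $$ (i, 0) = (if i = 0 then complex_of_real r else 0)"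
proof -
  obtain as where "char_poly A = (\<Prod>a\<leftarrow>as. [:-a, 1:])" "length as = Suc m"
    using char_poly_factorized[OF A] by blast
  then obtain e where "poly (char_poly A) e = 0" by (cases as) auto
  then obtain v where "eigenvector A v e"
    using eigenvalue_root_char_poly[OF A] unfolding eigenvalue_def by blast
  then have v: "v \<in> carrier_vec (Suc m)" "v \<noteq> 0\<^sub>v (Suc m)" and Av: "A *\<^sub>v v = e \<cdot>\<^sub>v v"
    using A unfolding eigenvector_def by auto
  obtain W c where W: "unitary_mat (Suc m) W" and Wv: "col W 0 = c \<cdot>\<^sub>v v"
    using unitary_mat_first_column[OF v] by blast
  have Wc: "W \<in> carrier_mat (Suc m) (Suc m)" "adj W \<in> carrier_mat (Suc m) (Suc m)"
    using W by (auto simp: unitary_mat_def)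
  define B where "B = adj W * A * W"
  have B: "B \<in> carrier_mat (Suc m) (Suc m)"
    unfolding B_def using mult_carrier_mat[OF mult_carrier_mat[OF Wc(2) A] Wc(1)] .
  have "col B 0 = (adj W * A) *\<^sub>v col W 0"
    unfolding B_def using col_mult2[OF mult_carrier_mat[OF Wc(2) A] Wc(1)] by simp
  also have "\<dots> = adj W *\<^sub>v (A *\<^sub>v (c \<cdot>\<^sub>v v))"
    using Wv assoc_mult_mat_vec[OF Wc(2) A] v by simp
  also have "\<dots> = e \<cdot>\<^sub>v (adj W *\<^sub>v col W 0)"
    using v Av Wv
    by (simp add: mult_mat_vec[OF Wc(2)] mult_mat_vec[OF A] smult_smult_assoc mult.commute)
  also have "adj W *\<^sub>v col W 0 = col (adj W * W) 0"
    by (rule col_mult2[OF Wc(2) Wc(1), symmetric]) simp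
  also have "\<dots> = unit_vec (Suc m) 0"
    using W by (simp add: unitary_mat_def)
  finally have col_B: "col B 0 = e \<cdot>\<^sub>v unit_vec (Suc m) 0" .
  then have B_col: "B $$ (i, 0) = (if i = 0 then e else 0)" if "i < Suc m" for i
    using B that by (metis (no_types, lifting) carrier_matD col_def index_col index_smult_vec index_unit_vec
        mult_cancel_left1 mult_zero_right zero_less_Suc)
  have "adj B = B"
    using adj_sandwich[OF Wc(2) A] hA by (simp add: B_def)
  then have "cnj e = e" using B_col[of 0] B by (metis adj_index carrier_matD zero_less_Suc)
  then have "e = complex_of_real (Re e)" by (simp add: complex_eq_iff)
  then show ?thesis using that[OF W] B_col unfolding B_def by metis
qed

theorem hermitian_spectral:
  assumes "A \<in> carrier_mat n n" "adj A = A"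
  shows "\<exists>U l. unitary_mat n U \<and> A = U * real_diag_mat n l * adj U"
  using assms
proof (induction n arbitrary: A)
  case 0
  then have "A = 1\<^sub>m 0 * real_diag_mat 0 (\<lambda>_. 0) * adj (1\<^sub>m 0)" by (intro eq_matI) auto
  then show ?case by (intro exI[of _ "1\<^sub>m 0"] exI[of _ "\<lambda>_. 0"]) (simp add: unitary_mat_def)
next
  case (Suc m A)
  obtain W r where W: "unitary_mat (Suc m) W"
    and B_col: "\<And>i. i < Suc m \<Longrightarrow> (adj W * A * W) $$ (i, 0) = (if i = 0 then complex_of_real r else 0)"
    using hermitian_deflation[OF Suc.prems] by blast
  have Wc: "W \<in> carrier_mat (Suc m) (Suc m)" "adj W \<in> carrier_mat (Suc m) (Suc m)"
    using W by (auto simp: unitary_mat_def)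
  have B: "adj W * A * W \<in> carrier_mat (Suc m) (Suc m)" "adj (adj W * A * W) = adj W * A * W"
    using mult_carrier_mat[OF mult_carrier_mat[OF Wc(2) Suc.prems(1)] Wc(1)]
      adj_sandwich[OF Wc(2) Suc.prems(1)] Suc.prems(2) by simp_all
  obtain C where C: "C \<in> carrier_mat m m" "adj C = C" and B_eq: "adj W * A * W = block_diag (complex_of_real r) C"
    using hermitian_block_diag_of_first_column[OF B B_col] by blast
  obtain U l where U: "unitary_mat m U" and C_eq: "C = U * real_diag_mat m l * adj U"
    using Suc.IH[OF C] by blast
  have Uc: "U \<in> carrier_mat m m" using U by (simp add: unitary_mat_def)
  define V where "V = block_diag 1 U"
  define l' where "l' k = (case k of 0 \<Rightarrow> r | Suc k \<Rightarrow> l k)" for k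
  have "adj W * A * W = V * real_diag_mat (Suc m) l' * adj V"
    using Uc block_diag_mult[of U m "real_diag_mat m l" 1 "complex_of_real r"]
      block_diag_mult[of "U * real_diag_mat m l" m "adj U" "complex_of_real r" 1]
    by (simp add: B_eq C_eq V_def real_diag_mat_Suc l'_def adj_block_diag)
  then have "A = W * (V * real_diag_mat (Suc m) l' * adj V) * adj W"
    using unitary_mat_sandwich_cancel[OF W Suc.prems(1)] by simp
  also have "\<dots> = W * V * real_diag_mat (Suc m) l' * adj (W * V)"
    using nested_sandwich[OF Wc(1) block_diag_carrier[OF Uc] real_diag_mat_carrier] by (simp add: V_def)
  finally have "A = W * V * real_diag_mat (Suc m) l' * adj (W * V)" .
  moreover have "unitary_mat (Suc m) (W * V)"
    using W U by (simp add: V_def unitary_mat_mult unitary_mat_block_diag_one)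
  ultimately show ?case by blast
qed

section \<open>Trace norm\<close>

lemma sum_order_linear_factors:
  fixes xs :: "complex list" and f :: "complex \<Rightarrow> real"
  assumes S: "finite S" and roots: "{e. poly (\<Prod>a\<leftarrow>xs. [:-a, 1:]) e = 0} \<subseteq> S"
  shows "(\<Sum>e\<in>S. real (Polynomial.order e (\<Prod>a\<leftarrow>xs. [:-a, 1:])) * f e) = (\<Sum>a\<leftarrow>xs. f a)"
  using roots
proof (induction xs)
  case Nil
  then show ?case by simp
next
  case (Cons a xs)
  let ?q = "\<Prod>a\<leftarrow>xs. [:-a, 1:]"
  have "(\<Prod>b\<leftarrow>ys. [:-b, 1:]) \<noteq> (0 :: complex poly)" for ys by (auto simp: prod_list_zero_iff)
  from this[of "a # xs"] have "[:-a, 1:] * ?q \<noteq> 0" by simp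
  then have order_eq:
    "Polynomial.order e (\<Prod>a\<leftarrow>a # xs. [:-a, 1:]) = (if e = a then 1 else 0) + Polynomial.order e ?q" for e
  proof -
    have "Polynomial.order e (\<Prod>a\<leftarrow>a # xs. [:-a, 1:]) = Polynomial.order e [:-a, 1:] + Polynomial.order e ?q"
      using order_mult[OF \<open>[:-a, 1:] * ?q \<noteq> 0\<close>] by (simp only: list.map prod_list.Cons)
    moreover have "Polynomial.order e [:-a, 1:] = (if e = a then 1 else 0)"
      using order_linear'[of e "-a"] by auto
    ultimately show ?thesis by (simp only:)
  qed
  have a: "a \<in> S" and roots_q: "{e. poly ?q e = 0} \<subseteq> S" using Cons.prems by auto
  have "(\<Sum>e\<in>S. real (Polynomial.order e (\<Prod>a\<leftarrow>a # xs. [:-a, 1:])) * f e)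
      = (\<Sum>e\<in>S. (if e = a then f e else 0) + real (Polynomial.order e ?q) * f e)"
    unfolding order_eq by (intro sum.cong refl) (simp add: distrib_right)
  also have "\<dots> = f a + (\<Sum>e\<in>S. real (Polynomial.order e ?q) * f e)"
    using S a by (simp add: sum.distrib)
  finally show ?case using Cons.IH[OF roots_q] by simp
qed

lemma trace_norm_unitary_sandwich:
  assumes U: "unitary_mat n U"
  shows "trace_norm (U * real_diag_mat n l * adj U) = (\<Sum>k<n. \<bar>l k\<bar>)"
proof -
  let ?A = "U * real_diag_mat n l * adj U" and ?D = "real_diag_mat n l"
  let ?D2 = "real_diag_mat n (\<lambda>k. l k * l k)"
  have Uc: "U \<in> carrier_mat n n" "adj U \<in> carrier_mat n n" using U by (auto simp: unitary_mat_def)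
  have "adj ?A = ?A" using adj_sandwich[OF Uc(1) real_diag_mat_carrier] by simp
  then have AA: "adj ?A * ?A = U * ?D2 * adj U"
    by (simp add: unitary_sandwich_mult[OF U] real_diag_mat_mult)
  have "similar_mat (adj ?A * ?A) ?D2"
    unfolding similar_mat_def using AA Uc U unitary_mat_mult_adj[OF U]
    by (intro exI[of _ U] exI[of _ "adj U"] similar_mat_witI[of _ _ n]) (auto simp: unitary_mat_def)
  define p where "p = (\<Prod>a\<leftarrow>map (\<lambda>k. complex_of_real (l k * l k)) [0..<n]. [:-a, 1:])"
  have "char_poly (adj ?A * ?A) = char_poly ?D2"
    by (rule char_poly_similar) fact
  also have "\<dots> = (\<Prod>a\<leftarrow>diag_mat ?D2. [:-a, 1:])"
    by (rule char_poly_upper_triangular[OF real_diag_mat_carrier]) (simp add: upper_triangular_def real_diag_mat_def)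
  also have "diag_mat ?D2 = map (\<lambda>k. complex_of_real (l k * l k)) [0..<n]"
    by (auto simp: diag_mat_def real_diag_mat_def intro!: map_cong)
  finally have char_poly_eq: "char_poly (adj ?A * ?A) = p" by (simp only: p_def)
  have "finite {e. poly p e = 0}"
    unfolding p_def by (intro poly_roots_finite) (auto simp: prod_list_zero_iff)
  then have "trace_norm ?A = (\<Sum>a\<leftarrow>map (\<lambda>k. complex_of_real (l k * l k)) [0..<n]. sqrt (cmod a))"
    unfolding trace_norm_def Let_def char_poly_eq unfolding p_def
    by (intro sum_order_linear_factors) simp_all
  also have "\<dots> = (\<Sum>k<n. \<bar>l k\<bar>)"
    by (simp add: interv_sum_list_conv_sum_set_nat atLeast0LessThan o_def norm_mult)
  finally show ?thesis .
qed

lemma diag_norm_sum_le_trace_norm: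
  assumes A: "A \<in> carrier_mat n n" and hA: "adj A = A"
  shows "(\<Sum>j<n. cmod (A $$ (j, j))) \<le> trace_norm A"
proof -
  obtain U l where U: "unitary_mat n U" and A_eq: "A = U * real_diag_mat n l * adj U"
    using hermitian_spectral[OF A hA] by blast
  have Uc: "U \<in> carrier_mat n n" using U by (simp add: unitary_mat_def)
  have "(\<Sum>j<n. cmod (A $$ (j, j))) \<le> (\<Sum>j<n. \<Sum>k<n. \<bar>l k\<bar> * (cmod (U $$ (j, k)))\<^sup>2)"
  proof (rule sum_mono)
    fix j assume "j \<in> {..<n}"
    then have "A $$ (j, j) = (\<Sum>k<n. U $$ (j, k) * complex_of_real (l k) * cnj (U $$ (j, k)))"
      unfolding A_eq by (intro real_diag_sandwich_index[OF Uc]) simp_all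
    then have "cmod (A $$ (j, j)) \<le> (\<Sum>k<n. cmod (U $$ (j, k) * complex_of_real (l k) * cnj (U $$ (j, k))))"
      by (simp add: norm_sum)
    then show "cmod (A $$ (j, j)) \<le> (\<Sum>k<n. \<bar>l k\<bar> * (cmod (U $$ (j, k)))\<^sup>2)"
      by (simp add: norm_mult power2_eq_square mult_ac)
  qed
  also have "\<dots> = (\<Sum>k<n. \<bar>l k\<bar> * (\<Sum>j<n. (cmod (U $$ (j, k)))\<^sup>2))"
    by (subst sum.swap) (simp add: sum_distrib_left)
  also have "\<dots> = trace_norm A"
    unfolding A_eq trace_norm_unitary_sandwich[OF U] by (simp add: unitary_mat_column_norm[OF U])
  finally show ?thesis .
qed

lemma trace_norm_minus_ketbra_ge:
  assumes \<sigma>: "\<sigma> \<in> carrier_mat N N" "adj \<sigma> = \<sigma>" "mtrace \<sigma> = 1" and x: "x < N"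
  shows "2 * (1 - Re (\<sigma> $$ (x, x))) \<le> trace_norm (\<sigma> - ketbra N x)"
proof -
  let ?M = "\<sigma> - ketbra N x" and ?R = "{..<N} - {x}"
  have M: "?M \<in> carrier_mat N N" "adj ?M = ?M"
    using minus_carrier_mat[OF ketbra_carrier] adj_minus[OF \<sigma>(1) ketbra_carrier] \<sigma>(2) by simp_all
  have M_diag: "?M $$ (j, j) = \<sigma> $$ (j, j) - (if j = x then 1 else 0)" if "j < N" for j
    using \<sigma> that by (simp add: ketbra_def)
  have "(\<Sum>j<N. \<sigma> $$ (j, j)) = 1" using \<sigma> by (simp add: mtrace_def)
  then have rest: "(\<Sum>j\<in>?R. \<sigma> $$ (j, j)) = 1 - \<sigma> $$ (x, x)"
    using x by (simp add: sum.remove[of "{..<N}" x] algebra_simps)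
  have "1 - Re (\<sigma> $$ (x, x)) \<le> cmod (1 - \<sigma> $$ (x, x))"
    using complex_Re_le_cmod[of "1 - \<sigma> $$ (x, x)"] by simp
  moreover have "cmod (1 - \<sigma> $$ (x, x)) \<le> (\<Sum>j\<in>?R. cmod (?M $$ (j, j)))"
    unfolding rest[symmetric] using M_diag by (auto intro: order_trans[OF norm_sum] sum_mono)
  ultimately have "2 * (1 - Re (\<sigma> $$ (x, x))) \<le> cmod (?M $$ (x, x)) + (\<Sum>j\<in>?R. cmod (?M $$ (j, j)))"
    using M_diag[OF x] by (simp add: norm_minus_commute)
  also have "\<dots> = (\<Sum>j<N. cmod (?M $$ (j, j)))"
    using x by (simp add: sum.remove[of "{..<N}" x])
  also have "\<dots> \<le> trace_norm ?M" by (rule diag_norm_sum_le_trace_norm[OF M])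
  finally show ?thesis .
qed

section \<open>Incoherent operations\<close>

definition same_diag :: "nat \<Rightarrow> complex mat \<Rightarrow> complex mat \<Rightarrow> bool" where
  "same_diag n A B \<longleftrightarrow> (\<forall>i<n. A $$ (i, i) = B $$ (i, i))"

lemma incoherent_unitary_carrier: "incoherent_unitary m U \<Longrightarrow> U \<in> carrier_mat m m"
  by (auto simp: incoherent_unitary_def)

lemma incoherent_unitary_sandwich_diag:
  assumes U: "incoherent_unitary m U" and a: "a < m"
  obtains c where "c < m" "\<And>M. M \<in> carrier_mat m m \<Longrightarrow> (U * M * adj U) $$ (a, a) = M $$ (c, c)"
proof -
  obtain \<pi> \<theta> where bij: "bij_betw \<pi> {..<m} {..<m}"
    and U_eq: "U = mat m m (\<lambda>(i, j). if i = \<pi> j then exp (\<i> * complex_of_real (\<theta> j)) else 0)"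
    using U unfolding incoherent_unitary_def by blast
  have Uc: "U \<in> carrier_mat m m" by (simp add: U_eq)
  have "a \<in> \<pi> ` {..<m}" using bij a by (simp add: bij_betw_def)
  then obtain c where c: "c < m" "\<pi> c = a" by auto
  define z where "z = exp (\<i> * complex_of_real (\<theta> c))"
  have row: "U $$ (a, b) = (if b = c then z else 0)" if b: "b < m" for b
  proof -
    have "\<pi> b = a \<longleftrightarrow> b = c" using bij b c by (auto simp: bij_betw_def inj_on_def)
    then show ?thesis using a b by (auto simp: U_eq z_def)
  qed
  have z: "z * cnj z = 1"
    using complex_norm_square[of z] by (simp add: z_def)
  have "(U * M * adj U) $$ (a, a) = M $$ (c, c)" if M: "M \<in> carrier_mat m m" for M
  proof -
    have UM: "(U * M) $$ (a, j) = z * M $$ (c, j)" if j: "j < m" for j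
    proof -
      have "(U * M) $$ (a, j) = (\<Sum>b<m. U $$ (a, b) * M $$ (b, j))"
        by (rule mult_mat_index_sum[OF Uc M a j])
      also have "\<dots> = (\<Sum>b<m. if b = c then z * M $$ (c, j) else 0)"
        by (intro sum.cong refl) (simp add: row)
      finally show ?thesis using c by simp
    qed
    have "(U * M * adj U) $$ (a, a) = (\<Sum>j<m. (U * M) $$ (a, j) * cnj (U $$ (a, j)))"
      using Uc M a by (simp add: mult_mat_index_sum[of "U * M" m m "adj U" m] del: index_mult_mat)
    also have "\<dots> = (\<Sum>j<m. if j = c then M $$ (c, c) * (z * cnj z) else 0)"
      by (intro sum.cong refl) (simp add: UM row)
    finally show ?thesis using c z by simp
  qed
  with c show ?thesis using that by blast
qed

lemma incoherent_unitary_same_diag: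
  assumes "incoherent_unitary m U" "M \<in> carrier_mat m m" "M' \<in> carrier_mat m m" "same_diag m M M'"
  shows "same_diag m (U * M * adj U) (U * M' * adj U)"
  unfolding same_diag_def
proof (intro allI impI)
  fix a assume "a < m"
  then obtain c where "c < m" "\<And>M. M \<in> carrier_mat m m \<Longrightarrow> (U * M * adj U) $$ (a, a) = M $$ (c, c)"
    using incoherent_unitary_sandwich_diag[OF assms(1)] by blast
  then show "(U * M * adj U) $$ (a, a) = (U * M' * adj U) $$ (a, a)"
    using assms(2-4) by (simp add: same_diag_def)
qed

lemma kron_same_diag:
  assumes "\<rho> \<in> carrier_mat N N" "\<rho>' \<in> carrier_mat N N" "\<tau> \<in> carrier_mat D D" "same_diag N \<rho> \<rho>'"
  shows "same_diag (N * D) (kron \<rho> \<tau>) (kron \<rho>' \<tau>)"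
  using assms by (auto simp: same_diag_def kron_index less_mult_imp_div_less)

lemma ptrace2_dim [simp]: "dim_row (ptrace2 d m M) = d" "dim_col (ptrace2 d m M) = d"
  by (simp_all add: ptrace2_def)

lemma ptrace2_carrier [simp]: "ptrace2 d m M \<in> carrier_mat d d"
  by (metis ptrace2_dim carrier_matI)

lemma ptrace2_kron_one_diagonal_index:
  assumes Q: "Q \<in> carrier_mat D D" "diagonal_mat Q" and X: "X \<in> carrier_mat (N * D) (N * D)"
    and y: "y < N" "y' < N"
  shows "ptrace2 N D (kron (1\<^sub>m N) Q * X) $$ (y, y') = (\<Sum>r<D. Q $$ (r, r) * X $$ (y * D + r, y' * D + r))"
proof -
  have P: "kron (1\<^sub>m N) Q \<in> carrier_mat (N * D) (N * D)" "diagonal_mat (kron (1\<^sub>m N) Q)"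
    using Q by (simp_all add: diagonal_mat_kron diagonal_mat_one_mat)
  have "(kron (1\<^sub>m N) Q * X) $$ (y * D + r, y' * D + r) = Q $$ (r, r) * X $$ (y * D + r, y' * D + r)"
    if r: "r < D" for r
    using diagonal_mat_mult_index[OF P X mult_add_less_mult[OF y(1) r] mult_add_less_mult[OF y(2) r]]
      kron_index_mult_add[OF one_carrier_mat Q(1) y(1) r y(1) r] y by simp
  then show ?thesis using y by (simp add: ptrace2_def)
qed

lemma ptrace2_kron_one_diagonal_hermitian:
  assumes Q: "Q \<in> carrier_mat D D" "diagonal_mat Q" "adj Q = Q"
    and X: "X \<in> carrier_mat (N * D) (N * D)" "adj X = X"
  shows "adj (ptrace2 N D (kron (1\<^sub>m N) Q * X)) = ptrace2 N D (kron (1\<^sub>m N) Q * X)"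
proof (rule eq_matI)
  fix i j assume "i < dim_row (ptrace2 N D (kron (1\<^sub>m N) Q * X))" "j < dim_col (ptrace2 N D (kron (1\<^sub>m N) Q * X))"
  then have i: "i < N" and j: "j < N" by (simp_all add: ptrace2_def)
  have "cnj (Q $$ (r, r)) = Q $$ (r, r)" if "r < D" for r
    using adj_index[of r Q r] Q that by simp
  moreover have "cnj (X $$ (j * D + r, i * D + r)) = X $$ (i * D + r, j * D + r)" if "r < D" for r
    using adj_index[of "i * D + r" X "j * D + r"] X that i j by (simp add: mult_add_less_mult)
  ultimately show "adj (ptrace2 N D (kron (1\<^sub>m N) Q * X)) $$ (i, j) = ptrace2 N D (kron (1\<^sub>m N) Q * X) $$ (i, j)"
    using i j by (simp add: ptrace2_kron_one_diagonal_index[OF Q(1,2) X(1)] cnj_sum)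
qed simp_all

lemma ptrace2_kron_one_diagonal_same_diag:
  assumes "Q \<in> carrier_mat D D" "diagonal_mat Q"
    and "X \<in> carrier_mat (N * D) (N * D)" "X' \<in> carrier_mat (N * D) (N * D)" "same_diag (N * D) X X'"
  shows "same_diag N (ptrace2 N D (kron (1\<^sub>m N) Q * X)) (ptrace2 N D (kron (1\<^sub>m N) Q * X'))"
  using assms by (simp add: same_diag_def ptrace2_kron_one_diagonal_index mult_add_less_mult)

text \<open>\<open>Q\<close> is the projector \<open>1 \<otimes> |x><x|\<close> onto the measurement outcome; only its
  diagonality and Hermiticity are used.\<close>
lemma normalised_subchannel_form:
  assumes "normalised_subchannel n F"
  obtains D Q U \<tau> \<alpha> where "Q \<in> carrier_mat D D" "diagonal_mat Q" "adj Q = Q"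
    "incoherent_unitary (2 ^ n * D) U" "\<tau> \<in> carrier_mat D D" "adj \<tau> = \<tau>"
    "\<And>\<rho>. \<rho> \<in> carrier_mat (2 ^ n) (2 ^ n) \<Longrightarrow>
       F \<rho> = complex_of_real \<alpha> \<cdot>\<^sub>m ptrace2 (2 ^ n) D (kron (1\<^sub>m (2 ^ n)) Q * (U * kron \<rho> \<tau> * adj U))"
proof -
  obtain g k \<tau> U x \<alpha> where "density (g * k) \<tau>" "incoherent_unitary (2 ^ n * (g * k)) U"
    "\<forall>\<rho> \<in> carrier_mat (2 ^ n) (2 ^ n). F \<rho> = complex_of_real \<alpha> \<cdot>\<^sub>m ptrace2 (2 ^ n) (g * k)
       (kron (1\<^sub>m (2 ^ n)) (kron (1\<^sub>m g) (ketbra k x)) * (U * kron \<rho> \<tau> * adj U))"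
    using assms unfolding normalised_subchannel_def by blast
  moreover have "diagonal_mat (kron (1\<^sub>m g) (ketbra k x))"
    by (simp add: diagonal_mat_kron diagonal_mat_one_mat diagonal_mat_ketbra)
  ultimately show ?thesis
    using that[of "kron (1\<^sub>m g) (ketbra k x)" "g * k"] by (auto simp: density_def adj_kron)
qed

lemma normalised_subchannel_carrier:
  "normalised_subchannel n F \<Longrightarrow> \<rho> \<in> carrier_mat (2 ^ n) (2 ^ n) \<Longrightarrow> F \<rho> \<in> carrier_mat (2 ^ n) (2 ^ n)"
  by (elim normalised_subchannel_form) simp

lemma normalised_subchannel_trace:
  "normalised_subchannel n F \<Longrightarrow> density (2 ^ n) \<rho> \<Longrightarrow> mtrace (F \<rho>) = 1"
  unfolding normalised_subchannel_def by blast

lemma normalised_subchannel_hermitian: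
  assumes F: "normalised_subchannel n F" and \<rho>: "\<rho> \<in> carrier_mat (2 ^ n) (2 ^ n)" "adj \<rho> = \<rho>"
  shows "adj (F \<rho>) = F \<rho>"
proof -
  obtain D Q U \<tau> \<alpha> where Q: "Q \<in> carrier_mat D D" "diagonal_mat Q" "adj Q = Q"
    and U: "incoherent_unitary (2 ^ n * D) U" and \<tau>: "\<tau> \<in> carrier_mat D D" "adj \<tau> = \<tau>"
    and F_eq: "F \<rho> = complex_of_real \<alpha> \<cdot>\<^sub>m ptrace2 (2 ^ n) D (kron (1\<^sub>m (2 ^ n)) Q * (U * kron \<rho> \<tau> * adj U))"
    using normalised_subchannel_form[OF F] \<rho>(1) by metis
  have Uc: "U \<in> carrier_mat (2 ^ n * D) (2 ^ n * D)" by (rule incoherent_unitary_carrier[OF U])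
  have K: "kron \<rho> \<tau> \<in> carrier_mat (2 ^ n * D) (2 ^ n * D)" using \<rho> \<tau> by simp
  have X: "U * kron \<rho> \<tau> * adj U \<in> carrier_mat (2 ^ n * D) (2 ^ n * D)"
    using mult_carrier_mat[OF mult_carrier_mat[OF Uc K] adj_carrier[OF Uc]] .
  have "adj (U * kron \<rho> \<tau> * adj U) = U * kron \<rho> \<tau> * adj U"
    using adj_sandwich[OF Uc K] \<rho> \<tau> by (simp add: adj_kron)
  then show ?thesis
    by (simp add: F_eq adj_smult_real ptrace2_kron_one_diagonal_hermitian[OF Q X])
qed

lemma normalised_subchannel_same_diag:
  assumes F: "normalised_subchannel n F"
    and \<rho>: "\<rho> \<in> carrier_mat (2 ^ n) (2 ^ n)" "\<rho>' \<in> carrier_mat (2 ^ n) (2 ^ n)" "same_diag (2 ^ n) \<rho> \<rho>'"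
  shows "same_diag (2 ^ n) (F \<rho>) (F \<rho>')"
proof -
  obtain D Q U \<tau> \<alpha> where Q: "Q \<in> carrier_mat D D" "diagonal_mat Q"
    and U: "incoherent_unitary (2 ^ n * D) U" and \<tau>: "\<tau> \<in> carrier_mat D D"
    and F_eq: "\<And>\<rho>. \<rho> \<in> carrier_mat (2 ^ n) (2 ^ n) \<Longrightarrow>
       F \<rho> = complex_of_real \<alpha> \<cdot>\<^sub>m ptrace2 (2 ^ n) D (kron (1\<^sub>m (2 ^ n)) Q * (U * kron \<rho> \<tau> * adj U))"
    using normalised_subchannel_form[OF F] by metis
  have Uc: "U \<in> carrier_mat (2 ^ n * D) (2 ^ n * D)" by (rule incoherent_unitary_carrier[OF U])
  have "same_diag (2 ^ n * D) (U * kron \<rho> \<tau> * adj U) (U * kron \<rho>' \<tau> * adj U)"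
    using \<rho> \<tau> by (intro incoherent_unitary_same_diag[OF U] kron_same_diag) auto
  then have "same_diag (2 ^ n) (ptrace2 (2 ^ n) D (kron (1\<^sub>m (2 ^ n)) Q * (U * kron \<rho> \<tau> * adj U)))
      (ptrace2 (2 ^ n) D (kron (1\<^sub>m (2 ^ n)) Q * (U * kron \<rho>' \<tau> * adj U)))"
    using Uc \<rho> \<tau> by (intro ptrace2_kron_one_diagonal_same_diag[OF Q]) auto
  then show ?thesis by (simp add: F_eq \<rho> same_diag_def)
qed

lemma implementable_index:
  assumes "implementable n E"
  obtains N :: nat and p :: "nat \<Rightarrow> real" and F :: "nat \<Rightarrow> complex mat \<Rightarrow> complex mat"
  where "\<And>i. i < N \<Longrightarrow> normalised_subchannel n (F i)" "(\<Sum>i<N. p i) = 1"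
    "\<And>\<rho>. \<rho> \<in> carrier_mat (2 ^ n) (2 ^ n) \<Longrightarrow> E \<rho> \<in> carrier_mat (2 ^ n) (2 ^ n)"
    "\<And>\<rho> a b. \<rho> \<in> carrier_mat (2 ^ n) (2 ^ n) \<Longrightarrow> a < 2 ^ n \<Longrightarrow> b < 2 ^ n \<Longrightarrow>
       E \<rho> $$ (a, b) = (\<Sum>i<N. complex_of_real (p i) * F i \<rho> $$ (a, b))"
proof -
  obtain N :: nat and p :: "nat \<Rightarrow> real" and F :: "nat \<Rightarrow> complex mat \<Rightarrow> complex mat"
    where F: "\<forall>i<N. 0 \<le> p i \<and> normalised_subchannel n (F i)" and p: "(\<Sum>i<N. p i) = 1"
      and E_eq: "\<forall>\<rho> \<in> carrier_mat (2 ^ n) (2 ^ n).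
        E \<rho> = mat (2 ^ n) (2 ^ n) (\<lambda>(a, b). \<Sum>i<N. complex_of_real (p i) * F i \<rho> $$ (a, b))"
    using assms unfolding implementable_def by blast
  show ?thesis
  proof (rule that)
    show "normalised_subchannel n (F i)" if "i < N" for i using F that by blast
    show "(\<Sum>i<N. p i) = 1" by (rule p)
    show "E \<rho> \<in> carrier_mat (2 ^ n) (2 ^ n)" if "\<rho> \<in> carrier_mat (2 ^ n) (2 ^ n)" for \<rho>
      using E_eq that by simp
    show "E \<rho> $$ (a, b) = (\<Sum>i<N. complex_of_real (p i) * F i \<rho> $$ (a, b))"
      if "\<rho> \<in> carrier_mat (2 ^ n) (2 ^ n)" "a < 2 ^ n" "b < 2 ^ n" for \<rho> a b
      using E_eq that by simp
  qed
qed

lemma implementable_carrier: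
  "implementable n E \<Longrightarrow> \<rho> \<in> carrier_mat (2 ^ n) (2 ^ n) \<Longrightarrow> E \<rho> \<in> carrier_mat (2 ^ n) (2 ^ n)"
  by (elim implementable_index) blast

lemma implementable_same_diag:
  assumes E: "implementable n E"
    and \<rho>: "\<rho> \<in> carrier_mat (2 ^ n) (2 ^ n)" "\<rho>' \<in> carrier_mat (2 ^ n) (2 ^ n)" "same_diag (2 ^ n) \<rho> \<rho>'"
  shows "same_diag (2 ^ n) (E \<rho>) (E \<rho>')"
proof -
  obtain N :: nat and p and F where F: "\<And>i. i < N \<Longrightarrow> normalised_subchannel n (F i)"
    and "(\<Sum>i<N. p i) = 1" and "\<And>\<rho>. \<rho> \<in> carrier_mat (2 ^ n) (2 ^ n) \<Longrightarrow> E \<rho> \<in> carrier_mat (2 ^ n) (2 ^ n)"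
    and E_index: "\<And>\<rho> a b. \<rho> \<in> carrier_mat (2 ^ n) (2 ^ n) \<Longrightarrow> a < 2 ^ n \<Longrightarrow> b < 2 ^ n \<Longrightarrow>
       E \<rho> $$ (a, b) = (\<Sum>i<N. complex_of_real (p i) * F i \<rho> $$ (a, b))"
    by (rule implementable_index[OF E]) blast
  have "same_diag (2 ^ n) (F i \<rho>) (F i \<rho>')" if "i < N" for i
    using normalised_subchannel_same_diag[OF F[OF that] \<rho>] .
  then show ?thesis using \<rho> by (simp add: same_diag_def E_index)
qed

lemma implementable_hermitian:
  assumes E: "implementable n E" and \<rho>: "\<rho> \<in> carrier_mat (2 ^ n) (2 ^ n)" "adj \<rho> = \<rho>"
  shows "adj (E \<rho>) = E \<rho>"
proof -
  obtain N :: nat and p and F where F: "\<And>i. i < N \<Longrightarrow> normalised_subchannel n (F i)"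
    and "(\<Sum>i<N. p i) = 1" and E_carrier: "\<And>\<rho>. \<rho> \<in> carrier_mat (2 ^ n) (2 ^ n) \<Longrightarrow> E \<rho> \<in> carrier_mat (2 ^ n) (2 ^ n)"
    and E_index: "\<And>\<rho> a b. \<rho> \<in> carrier_mat (2 ^ n) (2 ^ n) \<Longrightarrow> a < 2 ^ n \<Longrightarrow> b < 2 ^ n \<Longrightarrow>
       E \<rho> $$ (a, b) = (\<Sum>i<N. complex_of_real (p i) * F i \<rho> $$ (a, b))"
    by (rule implementable_index[OF E]) blast
  have "cnj (F i \<rho> $$ (b, a)) = F i \<rho> $$ (a, b)" if "i < N" "a < 2 ^ n" "b < 2 ^ n" for i a b
  proof -
    have "F i \<rho> \<in> carrier_mat (2 ^ n) (2 ^ n)" by (rule normalised_subchannel_carrier[OF F[OF that(1)] \<rho>(1)])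
    then have "adj (F i \<rho>) $$ (a, b) = cnj (F i \<rho> $$ (b, a))" using that by simp
    then show ?thesis using normalised_subchannel_hermitian[OF F[OF that(1)] \<rho>] by simp
  qed
  then show ?thesis
    using E_carrier[OF \<rho>(1)] by (intro eq_matI) (simp_all add: E_index[OF \<rho>(1)] cnj_sum)
qed

lemma implementable_trace:
  assumes E: "implementable n E" and \<rho>: "density (2 ^ n) \<rho>"
  shows "mtrace (E \<rho>) = 1"
proof -
  have \<rho>_carrier: "\<rho> \<in> carrier_mat (2 ^ n) (2 ^ n)" using \<rho> by (simp add: density_def)
  obtain N :: nat and p and F where F: "\<And>i. i < N \<Longrightarrow> normalised_subchannel n (F i)" and p: "(\<Sum>i<N. p i) = 1"
    and E_carrier: "\<And>\<rho>. \<rho> \<in> carrier_mat (2 ^ n) (2 ^ n) \<Longrightarrow> E \<rho> \<in> carrier_mat (2 ^ n) (2 ^ n)"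
    and E_index: "\<And>\<rho> a b. \<rho> \<in> carrier_mat (2 ^ n) (2 ^ n) \<Longrightarrow> a < 2 ^ n \<Longrightarrow> b < 2 ^ n \<Longrightarrow>
       E \<rho> $$ (a, b) = (\<Sum>i<N. complex_of_real (p i) * F i \<rho> $$ (a, b))"
    by (rule implementable_index[OF E]) blast
  have F_trace: "(\<Sum>a<2 ^ n. F i \<rho> $$ (a, a)) = 1" if "i < N" for i
    using normalised_subchannel_trace[OF F[OF that] \<rho>] normalised_subchannel_carrier[OF F[OF that] \<rho>_carrier]
    by (simp add: mtrace_def)
  have "mtrace (E \<rho>) = (\<Sum>a<2 ^ n. \<Sum>i<N. complex_of_real (p i) * F i \<rho> $$ (a, a))"
    using E_carrier[OF \<rho>_carrier] by (simp add: mtrace_def E_index[OF \<rho>_carrier])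
  also have "\<dots> = (\<Sum>i<N. complex_of_real (p i) * (\<Sum>a<2 ^ n. F i \<rho> $$ (a, a)))"
    by (subst sum.swap) (simp add: sum_distrib_left)
  also have "\<dots> = complex_of_real (\<Sum>i<N. p i)"
    by (simp add: F_trace of_real_sum)
  also have "\<dots> = 1" by (simp add: p)
  finally show ?thesis .
qed

lemma implementable_density_image:
  assumes E: "implementable n E" and \<rho>: "density (2 ^ n) \<rho>"
  shows "E \<rho> \<in> carrier_mat (2 ^ n) (2 ^ n)" "adj (E \<rho>) = E \<rho>" "mtrace (E \<rho>) = 1"
proof -
  have "\<rho> \<in> carrier_mat (2 ^ n) (2 ^ n)" "adj \<rho> = \<rho>" using \<rho> by (simp_all add: density_def)
  then show "E \<rho> \<in> carrier_mat (2 ^ n) (2 ^ n)" "adj (E \<rho>) = E \<rho>" "mtrace (E \<rho>) = 1"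
    using implementable_carrier[OF E] implementable_hermitian[OF E] implementable_trace[OF E \<rho>] by simp_all
qed

section \<open>Hadamard gates\<close>

lemma hadamard1_carrier [simp]: "hadamard1 \<in> carrier_mat 2 2"
  by (simp add: hadamard1_def)

lemma hadamard1_index:
  "i < 2 \<Longrightarrow> j < 2 \<Longrightarrow>
   hadamard1 $$ (i, j) = (if i = 1 \<and> j = 1 then - 1 / complex_of_real (sqrt 2) else 1 / complex_of_real (sqrt 2))"
  by (simp add: hadamard1_def)

lemma hadamard1_mult_self: "hadamard1 * hadamard1 = 1\<^sub>m 2"
proof (rule eq_matI)
  fix i j assume "i < dim_row (1\<^sub>m 2)" "j < dim_col (1\<^sub>m 2)"
  then have i: "i < 2" and j: "j < 2" by auto
  have half: "1 / complex_of_real (sqrt 2) * (1 / complex_of_real (sqrt 2)) = 1 / 2"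
    by (simp flip: of_real_mult)
  have "(hadamard1 * hadamard1) $$ (i, j) = hadamard1 $$ (i, 0) * hadamard1 $$ (0, j) + hadamard1 $$ (i, 1) * hadamard1 $$ (1, j)"
    using i j by (simp add: mult_mat_index_sum[OF hadamard1_carrier hadamard1_carrier] numeral_2_eq_2 del: index_mult_mat)
  also have "\<dots> = 1\<^sub>m 2 $$ (i, j)"
    using i j half by (auto simp: hadamard1_index less_2_cases_iff)
  finally show "(hadamard1 * hadamard1) $$ (i, j) = 1\<^sub>m 2 $$ (i, j)" .
qed (simp_all add: hadamard1_def)

lemma hadamard1_index_norm: "i < 2 \<Longrightarrow> j < 2 \<Longrightarrow> (cmod (hadamard1 $$ (i, j)))\<^sup>2 = 1 / 2"
  by (auto simp: hadamard1_index norm_divide power_divide)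

lemma hadamard_n_carrier [simp]: "hadamard_n n \<in> carrier_mat (2 ^ n) (2 ^ n)"
  by (induction n) auto

lemma hadamard_n_mult_self: "hadamard_n n * hadamard_n n = 1\<^sub>m (2 ^ n)"
  by (induction n)
    (simp_all add: kron_mult[OF hadamard1_carrier hadamard_n_carrier hadamard1_carrier hadamard_n_carrier]
      hadamard1_mult_self kron_one_mat)

lemma hadamard_n_index_norm:
  "i < 2 ^ n \<Longrightarrow> j < 2 ^ n \<Longrightarrow> (cmod (hadamard_n n $$ (i, j)))\<^sup>2 = 1 / 2 ^ n"
proof (induction n arbitrary: i j)
  case 0
  then show ?case by simp
next
  case (Suc n)
  have dims: "dim_row (hadamard_n n) = 2 ^ n" "dim_col (hadamard_n n) = 2 ^ n"
    using hadamard_n_carrier[of n] by (simp_all del: hadamard_n_carrier)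
  have i: "i < 2 * 2 ^ n" and j: "j < 2 * 2 ^ n" using Suc.prems by auto
  have "hadamard_n (Suc n) $$ (i, j)
      = hadamard1 $$ (i div 2 ^ n, j div 2 ^ n) * hadamard_n n $$ (i mod 2 ^ n, j mod 2 ^ n)"
    using i j carrier_matD[OF hadamard1_carrier] by (simp add: kron_index dims)
  then show ?case
    using i j by (simp add: norm_mult power_mult_distrib hadamard1_index_norm Suc.IH
        less_mult_imp_div_less mod_less_of_less_mult)
qed

definition hadamard_state :: "nat \<Rightarrow> nat \<Rightarrow> complex mat" where
  "hadamard_state n x = hadamard_n n * ketbra (2 ^ n) x * adj (hadamard_n n)"

lemma hadamard_state_carrier [simp]: "hadamard_state n x \<in> carrier_mat (2 ^ n) (2 ^ n)"
  unfolding hadamard_state_def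
  by (rule mult_carrier_mat[OF mult_carrier_mat[OF hadamard_n_carrier ketbra_carrier] adj_carrier[OF hadamard_n_carrier]])

lemma hadamard_state_index:
  assumes x: "x < 2 ^ n" and i: "i < 2 ^ n" and j: "j < 2 ^ n"
  shows "hadamard_state n x $$ (i, j) = hadamard_n n $$ (i, x) * cnj (hadamard_n n $$ (j, x))"
proof -
  let ?H = "hadamard_n n"
  have HK: "(?H * ketbra (2 ^ n) x) $$ (i, t) = (if t = x then ?H $$ (i, x) else 0)" if t: "t < 2 ^ n" for t
  proof -
    have "(?H * ketbra (2 ^ n) x) $$ (i, t) = (\<Sum>k<2 ^ n. ?H $$ (i, k) * ketbra (2 ^ n) x $$ (k, t))"
      by (rule mult_mat_index_sum[OF hadamard_n_carrier ketbra_carrier i t])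
    also have "\<dots> = (\<Sum>k<2 ^ n. if k = x then (if t = x then ?H $$ (i, x) else 0) else 0)"
      by (intro sum.cong refl) (use t in \<open>auto simp: ketbra_def\<close>)
    finally show ?thesis using x by simp
  qed
  have "hadamard_state n x $$ (i, j) = (\<Sum>t<2 ^ n. (?H * ketbra (2 ^ n) x) $$ (i, t) * adj ?H $$ (t, j))"
    unfolding hadamard_state_def
    by (rule mult_mat_index_sum[OF mult_carrier_mat[OF hadamard_n_carrier ketbra_carrier]
          adj_carrier[OF hadamard_n_carrier] i j])
  also have "\<dots> = (\<Sum>t<2 ^ n. if t = x then ?H $$ (i, x) * cnj (?H $$ (j, x)) else 0)"
    using j carrier_matD[OF hadamard_n_carrier[of n]] by (intro sum.cong refl) (simp add: HK)
  also have "\<dots> = ?H $$ (i, x) * cnj (?H $$ (j, x))"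
    using x by simp
  finally show ?thesis .
qed

lemma hadamard_state_diag: "x < 2 ^ n \<Longrightarrow> i < 2 ^ n \<Longrightarrow> hadamard_state n x $$ (i, i) = 1 / 2 ^ n"
  using hadamard_n_index_norm[of i n x]
  by (simp add: hadamard_state_index complex_norm_square[symmetric] del: of_real_power) simp

lemma density_hadamard_state:
  assumes x: "x < 2 ^ n"
  shows "density (2 ^ n) (hadamard_state n x)"
  unfolding density_def
proof (intro conjI allI)
  let ?H = "hadamard_n n"
  show "hadamard_state n x \<in> carrier_mat (2 ^ n) (2 ^ n)" by simp
  show "adj (hadamard_state n x) = hadamard_state n x"
    unfolding hadamard_state_def using adj_sandwich[OF hadamard_n_carrier ketbra_carrier] by simp
  fix v :: "nat \<Rightarrow> complex"
  define s where "s = (\<Sum>i<2 ^ n. cnj (v i) * ?H $$ (i, x))"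
  have "(\<Sum>i<2 ^ n. \<Sum>j<2 ^ n. cnj (v i) * hadamard_state n x $$ (i, j) * v j)
      = (\<Sum>i<2 ^ n. \<Sum>j<2 ^ n. (cnj (v i) * ?H $$ (i, x)) * (v j * cnj (?H $$ (j, x))))"
    by (intro sum.cong refl) (simp add: hadamard_state_index[OF x] mult_ac)
  also have "\<dots> = s * cnj s"
    by (simp add: s_def sum_product cnj_sum)
  also have "\<dots> = complex_of_real ((cmod s)\<^sup>2)" by (rule complex_norm_square[symmetric])
  finally show "0 \<le> Re (\<Sum>i<2 ^ n. \<Sum>j<2 ^ n. cnj (v i) * hadamard_state n x $$ (i, j) * v j)" by simp
next
  show "mtrace (hadamard_state n x) = 1"
    using carrier_matD[OF hadamard_state_carrier[of n x]] by (simp add: mtrace_def hadamard_state_diag[OF x])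
qed

lemma hadamard_n_conj_hadamard_state:
  "hadamard_n n * hadamard_state n x * adj (hadamard_n n) = ketbra (2 ^ n) x"
proof -
  let ?H = "hadamard_n n"
  have "?H * hadamard_state n x * adj ?H = ?H * ?H * ketbra (2 ^ n) x * adj (?H * ?H)"
    unfolding hadamard_state_def by (rule nested_sandwich[OF hadamard_n_carrier hadamard_n_carrier ketbra_carrier])
  then show ?thesis by (simp add: hadamard_n_mult_self)
qed

theorem theorem2:
  fixes n :: nat and \<epsilon> :: real and E :: "complex mat \<Rightarrow> complex mat"
  assumes "0 \<le> \<epsilon>" and "\<epsilon> < 1 - 1 / 2 ^ n"
    and "implementable n E"
  shows "\<not> approximates n \<epsilon> E (\<lambda>\<rho>. hadamard_n n * \<rho> * adj (hadamard_n n))"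
proof
  let ?N = "2 ^ n :: nat" and ?\<psi> = "hadamard_state n"
  assume "approximates n \<epsilon> E (\<lambda>\<rho>. hadamard_n n * \<rho> * adj (hadamard_n n))"
  then have "trace_norm (E (?\<psi> x) - hadamard_n n * ?\<psi> x * adj (hadamard_n n)) / 2 \<le> \<epsilon>" if "x < ?N" for x
    using density_hadamard_state[OF that] unfolding approximates_def by blast
  then have close: "trace_norm (E (?\<psi> x) - ketbra ?N x) / 2 \<le> \<epsilon>" if "x < ?N" for x
    using that by (simp only: hadamard_n_conj_hadamard_state)
  note E_image = implementable_density_image[OF assms(3) density_hadamard_state]
  have same: "same_diag ?N (E (?\<psi> x)) (E (?\<psi> 0))" if "x < ?N" for x
    using that by (intro implementable_same_diag[OF assms(3)]) (simp_all add: same_diag_def hadamard_state_diag)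
  have "(\<Sum>j<?N. Re (E (?\<psi> 0) $$ (j, j))) = 1"
    using E_image[of 0] by (simp add: mtrace_def flip: Re_sum)
  then obtain x where x: "x < ?N" and "Re (E (?\<psi> 0) $$ (x, x)) \<le> 1 / 2 ^ n"
    using exists_le_average[of ?N "\<lambda>j. Re (E (?\<psi> 0) $$ (j, j))"] by auto
  then have "Re (E (?\<psi> x) $$ (x, x)) \<le> 1 / 2 ^ n"
    using same[OF x] x by (simp add: same_diag_def)
  moreover have "2 * (1 - Re (E (?\<psi> x) $$ (x, x))) \<le> trace_norm (E (?\<psi> x) - ketbra ?N x)"
    using E_image[OF x] x by (intro trace_norm_minus_ketbra_ge)
  ultimately show False using close[OF x] assms(2) by argo
qed

end
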